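(* Let $M$ be a Hausdorff space, $C_b(M)$ the $C^\ast$-algebra of bounded continuous functions $M\to\mathbb{C}$, and $C^{pt}(\mathcal{Q}(\mathcal{T}(M)))$ the $C^\ast$-subalgebra of $C(\mathcal{Q}(\mathcal{T}(M)))$ consisting of all continuous $\psi:\mathcal{Q}(\mathcal{T}(M))\to\mathbb{C}$ that are constant on each fibre of $pt:\mathcal{Q}^{pt}(\mathcal{T}(M))\to M$. Then the map \[ f_\ast:C_b(M)\to C^{pt}(\mathcal{Q}(\mathcal{T}(M))),\qquad \varphi\mapsto f_{E^{\varphi}}:=f_{E^{\mathrm{Re}\,\varphi}}+i\,f_{E^{\mathrm{Im}\,\varphi}}, \] is a $\ast$-isomorphism of $C^\ast$-algebras.
   Context: $\mathcal{T}(M)$ is the lattice of open subsets of $M$. A quasipoint of $\mathcal{T}(M)$ is a maximal dual ideal (maximal nonempty family of open sets not containing $\emptyset$, upward closed and closed under finite intersections); $\mathcal{Q}(\mathcal{T}(M))$ is the set of quasipoints with topology having base $\{\mathfrak{B}\mid U\in\mathfrak{B}\}$, $U\in\mathcal{T}(M)$ (a compact space). $\mathfrak{B}$ is over $x\in M$ if $x\in\bigcap_{U\in\mathfrak{B}}\overline{U}$ (at most one such $x$ since $M$ is Hausdorff); $\mathcal{Q}^{pt}(\mathcal{T}(M))$ is the set of quasipoints over some point, and $pt(\mathfrak{B})=x$ if $\mathfrak{B}$ is over $x$. For a bounded continuous $\psi:M\to\mathbb{R}$, $E^\psi_\lambda:=\mathrm{int}\,\psi^{-1}(]-\infty,\lambda])$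 and $f_{E^\psi}(\mathfrak{B}):=\inf\{\lambda\in\mathbb{R}\mid E^\psi_\lambda\in\mathfrak{B}\}$. $E^\varphi$ denotes the complex spectral family $E^\varphi_{\lambda,\mu}=E^{\mathrm{Re}\,\varphi}_\lambda\cap E^{\mathrm{Im}\,\varphi}_\mu$. *)

theory Defs
  imports "HOL-Analysis.Analysis"
begin

definition dual_ideal :: "'a::topological_space set set \<Rightarrow> bool" where
  "dual_ideal \<B> \<longleftrightarrow> \<B> \<noteq> {} \<and> (\<forall>U\<in>\<B>. open U) \<and> {} \<notin> \<B> \<and>
     (\<forall>U V. U \<in> \<B> \<longrightarrow> open V \<longrightarrow> U \<subseteq> V \<longrightarrow> V \<in> \<B>) \<and>
     (\<forall>U V. U \<in> \<B> \<longrightarrow> V \<in> \<B> \<longrightarrow> U \<inter> V \<in> \<B>)"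

definition quasipoint :: "'a::topological_space set set \<Rightarrow> bool" where
  "quasipoint \<B> \<longleftrightarrow> dual_ideal \<B> \<and> (\<forall>\<C>. dual_ideal \<C> \<and> \<B> \<subseteq> \<C> \<longrightarrow> \<C> = \<B>)"

definition Q_top :: "'a::topological_space set set topology" where
  "Q_top = topology_generated_by {{\<B>. quasipoint \<B> \<and> U \<in> \<B>} | U. open U}"

definition over :: "'a::topological_space set set \<Rightarrow> 'a \<Rightarrow> bool" where
  "over \<B> x \<longleftrightarrow> quasipoint \<B> \<and> x \<in> (\<Inter>U\<in>\<B>. closure U)"

definition Cb :: "('a::topological_space \<Rightarrow> complex) set" where
  "Cb = {\<phi>. continuous_on UNIV \<phi> \<and> bounded (range \<phi>)}"

text \<open>C^pt(Q(T(M))): continuous functions on Q(T(M)) constant on the fibres of pt;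
  represented as functions that vanish outside the set of quasipoints.\<close>
definition Cpt :: "('a::topological_space set set \<Rightarrow> complex) set" where
  "Cpt = {\<psi>. (\<forall>\<B>. \<not> quasipoint \<B> \<longrightarrow> \<psi> \<B> = 0) \<and>
              continuous_map Q_top euclidean \<psi> \<and>
              (\<forall>x \<B>1 \<B>2. over \<B>1 x \<and> over \<B>2 x \<longrightarrow> \<psi> \<B>1 = \<psi> \<B>2)}"

definition spec_fam :: "('a::topological_space \<Rightarrow> real) \<Rightarrow> real \<Rightarrow> 'a set" where
  "spec_fam \<psi> t = interior (\<psi> -` {..t})"

definition f_E :: "('a::topological_space \<Rightarrow> real) \<Rightarrow> 'a set set \<Rightarrow> real" where
  "f_E \<psi> \<B> = Inf {t. spec_fam \<psi> t \<in> \<B>}"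

definition fstar :: "('a::topological_space \<Rightarrow> complex) \<Rightarrow> 'a set set \<Rightarrow> complex" where
  "fstar \<phi> \<B> = (if quasipoint \<B> then
      complex_of_real (f_E (\<lambda>x. Re (\<phi> x)) \<B>) + \<i> * complex_of_real (f_E (\<lambda>x. Im (\<phi> x)) \<B>)
    else 0)"

end

theory Submission
  imports Defs
begin

text \<open>The open sets belonging to a quasipoint \<open>\<B>\<close> form a filter base on \<open>M\<close>, and for bounded
  continuous real \<open>\<psi>\<close> the number \<open>f\<^sub>E\<^sub>\<psi>(\<B>) = Inf {\<lambda>. E\<^sup>\<psi>\<^sub>\<lambda> \<in> \<B>}\<close> is the limit of \<open>\<psi>\<close> along this
  filter: it is approached from above by the definition of the infimum, and from below because
  maximality of \<open>\<B>\<close> provides a member of \<open>\<B>\<close> disjoint from \<open>{\<psi> < \<lambda>}\<close> whenever \<open>E\<^sup>\<psi>\<^sub>\<lambda> \<notin> \<B>\<close>.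
  Uniqueness of limits then makes \<open>f\<^sub>*\<close> a \<open>*\<close>-homomorphism, and since a quasipoint over \<open>x\<close> contains
  every open neighbourhood of \<open>x\<close>, \<open>f\<^sub>*\<phi>\<close> takes the value \<open>\<phi>(x)\<close> on the fibre over \<open>x\<close>; this gives
  injectivity and the fibre condition. Conversely, \<open>\<psi> \<in> C\<^sup>p\<^sup>t\<close> is the image of \<open>x \<mapsto> \<psi>(\<B>\<^sub>x)\<close> for any
  choice of quasipoints \<open>\<B>\<^sub>x\<close> over \<open>x\<close>; that this function is bounded and continuous follows from the
  compactness of the space of quasipoints, which in turn comes from Zorn's lemma applied to
  families of open sets with the finite intersection property.\<close>

section \<open>Dual ideals and quasipoints\<close>

lemma dual_ideal_open: "dual_ideal \<B> \<Longrightarrow> U \<in> \<B> \<Longrightarrow> open U"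
  unfolding dual_ideal_def by auto

lemma dual_ideal_Int: "dual_ideal \<B> \<Longrightarrow> U \<in> \<B> \<Longrightarrow> V \<in> \<B> \<Longrightarrow> U \<inter> V \<in> \<B>"
  unfolding dual_ideal_def by meson

lemma dual_ideal_mono: "dual_ideal \<B> \<Longrightarrow> U \<in> \<B> \<Longrightarrow> open V \<Longrightarrow> U \<subseteq> V \<Longrightarrow> V \<in> \<B>"
  unfolding dual_ideal_def by blast

lemma dual_ideal_empty: "dual_ideal \<B> \<Longrightarrow> {} \<notin> \<B>"
  unfolding dual_ideal_def by blast

lemma dual_ideal_UNIV: "dual_ideal \<B> \<Longrightarrow> UNIV \<in> \<B>"
  unfolding dual_ideal_def by blast

lemma dual_idealI:
  assumes "\<B> \<noteq> {}" "\<And>U. U \<in> \<B> \<Longrightarrow> open U" "{} \<notin> \<B>"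
    and "\<And>U V. U \<in> \<B> \<Longrightarrow> open V \<Longrightarrow> U \<subseteq> V \<Longrightarrow> V \<in> \<B>"
    and "\<And>U V. U \<in> \<B> \<Longrightarrow> V \<in> \<B> \<Longrightarrow> U \<inter> V \<in> \<B>"
  shows "dual_ideal \<B>"
  using assms unfolding dual_ideal_def by blast

lemma dual_ideal_Inter:
  assumes "dual_ideal \<B>" "finite \<F>" "\<F> \<subseteq> \<B>"
  shows "\<Inter>\<F> \<in> \<B>"
  using assms(2,3)
proof (induction \<F> rule: finite_induct)
  case empty
  then show ?case using dual_ideal_UNIV[OF assms(1)] by simp
next
  case (insert U \<F>)
  then show ?case using dual_ideal_Int[OF assms(1)] by simp
qed

lemma dual_ideal_Int_iff:
  "dual_ideal \<B> \<Longrightarrow> open U \<Longrightarrow> open V \<Longrightarrow> U \<inter> V \<in> \<B> \<longleftrightarrow> U \<in> \<B> \<and> V \<in> \<B>"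
  using dual_ideal_Int dual_ideal_mono[of \<B> "U \<inter> V"] by blast

lemma Union_chain_dual_ideal:
  assumes "\<CC> \<noteq> {}" "\<And>\<B>. \<B> \<in> \<CC> \<Longrightarrow> dual_ideal \<B>"
    and chain: "\<And>\<B> \<C>. \<B> \<in> \<CC> \<Longrightarrow> \<C> \<in> \<CC> \<Longrightarrow> \<B> \<subseteq> \<C> \<or> \<C> \<subseteq> \<B>"
  shows "dual_ideal (\<Union>\<CC>)"
proof (rule dual_idealI)
  show "\<Union>\<CC> \<noteq> {}" "{} \<notin> \<Union>\<CC>"
    using assms(1,2) dual_ideal_UNIV dual_ideal_empty by blast+
  show "open U" if "U \<in> \<Union>\<CC>" for U
    using that assms(2) dual_ideal_open by blast
  show "V \<in> \<Union>\<CC>" if "U \<in> \<Union>\<CC>" "open V" "U \<subseteq> V" for U V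
    using that assms(2) dual_ideal_mono by blast
  fix U V assume "U \<in> \<Union>\<CC>" "V \<in> \<Union>\<CC>"
  then obtain \<B> \<C> where "\<B> \<in> \<CC>" "\<C> \<in> \<CC>" "U \<in> \<B>" "V \<in> \<C>" by blast
  with chain[of \<B> \<C>] show "U \<inter> V \<in> \<Union>\<CC>"
    using assms(2) dual_ideal_Int by blast
qed

lemma quasipoint_dual_ideal: "quasipoint \<B> \<Longrightarrow> dual_ideal \<B>"
  unfolding quasipoint_def by blast

lemma quasipoint_extends:
  assumes "dual_ideal \<D>"
  shows "\<exists>\<B>. quasipoint \<B> \<and> \<D> \<subseteq> \<B>"
proof -
  let ?A = "{\<C>. dual_ideal \<C> \<and> \<D> \<subseteq> \<C>}"
  have "\<exists>\<B>\<in>?A. \<forall>\<C>\<in>?A. \<B> \<subseteq> \<C> \<longrightarrow> \<C> = \<B>"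
  proof (rule subset_Zorn_nonempty)
    show "?A \<noteq> {}" using assms by blast
    fix \<CC> assume ne: "\<CC> \<noteq> {}" and "subset.chain ?A \<CC>"
    then have sub: "\<CC> \<subseteq> ?A" and chain: "\<And>\<B> \<C>. \<B> \<in> \<CC> \<Longrightarrow> \<C> \<in> \<CC> \<Longrightarrow> \<B> \<subseteq> \<C> \<or> \<C> \<subseteq> \<B>"
      unfolding subset_chain_def by blast+
    have "dual_ideal (\<Union>\<CC>)"
    proof (rule Union_chain_dual_ideal[OF ne _ chain])
      show "dual_ideal \<B>" if "\<B> \<in> \<CC>" for \<B> using that sub by blast
    qed
    moreover have "\<D> \<subseteq> \<Union>\<CC>" using ne sub by blast
    ultimately show "\<Union>\<CC> \<in> ?A" by blast
  qed
  then obtain \<B> where "dual_ideal \<B>" "\<D> \<subseteq> \<B>"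
    and max: "\<And>\<C>. dual_ideal \<C> \<Longrightarrow> \<D> \<subseteq> \<C> \<Longrightarrow> \<B> \<subseteq> \<C> \<Longrightarrow> \<C> = \<B>"
    by auto
  have "quasipoint \<B>"
    unfolding quasipoint_def using \<open>dual_ideal \<B>\<close> max \<open>\<D> \<subseteq> \<B>\<close> by blast
  with \<open>\<D> \<subseteq> \<B>\<close> show ?thesis by blast
qed

lemma quasipoint_extends_fip:
  assumes opn: "\<And>V. V \<in> \<V> \<Longrightarrow> open V"
    and fip: "\<And>\<F>. finite \<F> \<Longrightarrow> \<F> \<subseteq> \<V> \<Longrightarrow> \<Inter>\<F> \<noteq> {}"
  shows "\<exists>\<B>. quasipoint \<B> \<and> \<V> \<subseteq> \<B>"
proof -
  define \<D> where "\<D> = {X. open X \<and> (\<exists>\<F>. finite \<F> \<and> \<F> \<subseteq> \<V> \<and> \<Inter>\<F> \<subseteq> X)}"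
  have \<D>_memI: "X \<in> \<D>" if "open X" "finite \<F>" "\<F> \<subseteq> \<V>" "\<Inter>\<F> \<subseteq> X" for X \<F>
    using that unfolding \<D>_def by blast
  have "dual_ideal \<D>"
  proof (rule dual_idealI)
    show "\<D> \<noteq> {}" using \<D>_memI[of UNIV "{}"] by blast
    show "{} \<notin> \<D>" using fip unfolding \<D>_def by auto
    show "\<And>U. U \<in> \<D> \<Longrightarrow> open U" unfolding \<D>_def by blast
    show "V \<in> \<D>" if "U \<in> \<D>" "open V" "U \<subseteq> V" for U V
    proof -
      obtain \<F> where "finite \<F>" "\<F> \<subseteq> \<V>" "\<Inter>\<F> \<subseteq> U" using \<open>U \<in> \<D>\<close> unfolding \<D>_def by blast
      with that(2,3) show ?thesis by (intro \<D>_memI) auto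
    qed
    fix U V assume "U \<in> \<D>" "V \<in> \<D>"
    then obtain \<F> \<G> where "open U" "finite \<F>" "\<F> \<subseteq> \<V>" "\<Inter>\<F> \<subseteq> U"
      and "open V" "finite \<G>" "\<G> \<subseteq> \<V>" "\<Inter>\<G> \<subseteq> V"
      unfolding \<D>_def by blast
    then show "U \<inter> V \<in> \<D>" by (intro \<D>_memI[of _ "\<F> \<union> \<G>"]) auto
  qed
  moreover have "\<V> \<subseteq> \<D>"
  proof
    fix V assume "V \<in> \<V>"
    with opn show "V \<in> \<D>" by (intro \<D>_memI[of V "{V}"]) auto
  qed
  ultimately show ?thesis using quasipoint_extends by blast
qed

lemma quasipoint_disjoint:
  assumes q: "quasipoint \<B>" and W: "open W" "W \<notin> \<B>"
  shows "\<exists>V\<in>\<B>. V \<inter> W = {}"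
proof (rule ccontr)
  assume meets: "\<not> (\<exists>V\<in>\<B>. V \<inter> W = {})"
  have d: "dual_ideal \<B>" using q by (rule quasipoint_dual_ideal)
  have "open V" if "V \<in> insert W \<B>" for V
    using that W(1) dual_ideal_open[OF d] by blast
  moreover have "\<Inter>\<F> \<noteq> {}" if "finite \<F>" "\<F> \<subseteq> insert W \<B>" for \<F>
  proof -
    have "\<Inter>(\<F> - {W}) \<in> \<B>" using that by (intro dual_ideal_Inter[OF d]) auto
    then have "\<Inter>(\<F> - {W}) \<inter> W \<noteq> {}" using meets by blast
    moreover have "\<Inter>(\<F> - {W}) \<inter> W \<subseteq> \<Inter>\<F>" by blast
    ultimately show ?thesis by blast
  qed
  ultimately obtain \<C> where \<C>: "quasipoint \<C>" "insert W \<B> \<subseteq> \<C>"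
    using quasipoint_extends_fip by metis
  then have "\<C> = \<B>" using q quasipoint_dual_ideal unfolding quasipoint_def by blast
  with \<C>(2) W(2) show False by blast
qed

lemma quasipoint_interior_compl:
  assumes q: "quasipoint \<B>" and "open U" "U \<notin> \<B>"
  shows "interior (- U) \<in> \<B>"
proof -
  obtain V where V: "V \<in> \<B>" "V \<inter> U = {}" using quasipoint_disjoint[OF assms] by blast
  have "open V" using dual_ideal_open[OF quasipoint_dual_ideal[OF q] V(1)] .
  with V(2) have "V \<subseteq> interior (- U)" by (intro interior_maximal) auto
  then show ?thesis using dual_ideal_mono[OF quasipoint_dual_ideal[OF q] V(1)] by simp
qed

section \<open>Convergence along a quasipoint\<close>

definition dual_ideal_filter :: "'a set set \<Rightarrow> 'a filter" where
  "dual_ideal_filter \<B> = (INF U\<in>\<B>. principal U)"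

lemma eventually_dual_ideal_filter:
  assumes "dual_ideal \<B>"
  shows "eventually P (dual_ideal_filter \<B>) \<longleftrightarrow> (\<exists>U\<in>\<B>. \<forall>x\<in>U. P x)"
proof -
  have "eventually P (dual_ideal_filter \<B>) \<longleftrightarrow> (\<exists>U\<in>\<B>. eventually P (principal U))"
    unfolding dual_ideal_filter_def
  proof (rule eventually_INF_base)
    show "\<B> \<noteq> {}" using dual_ideal_UNIV[OF assms] by blast
    fix U V assume "U \<in> \<B>" "V \<in> \<B>"
    then show "\<exists>W\<in>\<B>. principal W \<le> inf (principal U) (principal V)"
      by (intro bexI[of _ "U \<inter> V"]) (simp_all add: dual_ideal_Int[OF assms])
  qed
  then show ?thesis by (simp add: eventually_principal)
qed

lemma dual_ideal_filter_nontrivial: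
  assumes "dual_ideal \<B>"
  shows "dual_ideal_filter \<B> \<noteq> bot"
proof
  assume "dual_ideal_filter \<B> = bot"
  then have "eventually (\<lambda>x. False) (dual_ideal_filter \<B>)" by simp
  then obtain U where "U \<in> \<B>" "U = {}" unfolding eventually_dual_ideal_filter[OF assms] by blast
  with dual_ideal_empty[OF assms] show False by simp
qed

lemma tendsto_dual_ideal_filter_iff:
  assumes "dual_ideal \<B>"
  shows "(f \<longlongrightarrow> l) (dual_ideal_filter \<B>) \<longleftrightarrow> (\<forall>e>0. \<exists>U\<in>\<B>. \<forall>x\<in>U. dist (f x) l < e)"
  by (simp add: tendsto_iff eventually_dual_ideal_filter[OF assms])

lemma spec_fam_le: "x \<in> spec_fam \<psi> t \<Longrightarrow> \<psi> x \<le> t"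
  using interior_subset[of "\<psi> -` {..t}"] unfolding spec_fam_def by auto

lemma open_spec_fam: "open (spec_fam \<psi> t)"
  unfolding spec_fam_def by simp

lemma spec_fam_UNIV:
  assumes "\<And>x. \<psi> x \<le> t"
  shows "spec_fam \<psi> t = UNIV"
proof -
  have "\<psi> -` {..t} = UNIV" using assms by auto
  then show ?thesis unfolding spec_fam_def by simp
qed

lemma vimage_lessThan_subset_spec_fam:
  "continuous_on UNIV \<psi> \<Longrightarrow> \<psi> -` {..<t} \<subseteq> spec_fam \<psi> t"
  unfolding spec_fam_def by (rule interior_maximal) (auto intro: open_vimage)

lemma tendsto_f_E:
  fixes \<psi> :: "'a::topological_space \<Rightarrow> real"
  assumes q: "quasipoint \<B>" and cont: "continuous_on UNIV \<psi>" and bd: "bounded (range \<psi>)"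
  shows "(\<psi> \<longlongrightarrow> f_E \<psi> \<B>) (dual_ideal_filter \<B>)"
proof -
  have d: "dual_ideal \<B>" using q by (rule quasipoint_dual_ideal)
  obtain K where K: "\<And>x. \<bar>\<psi> x\<bar> \<le> K" using bd unfolding bounded_iff by auto
  define S where "S = {t. spec_fam \<psi> t \<in> \<B>}"
  have "K \<in> S"
    using K spec_fam_UNIV[of \<psi> K] dual_ideal_UNIV[OF d] unfolding S_def by (simp add: abs_le_iff)
  then have S_ne: "S \<noteq> {}" by blast
  have "- K \<le> t" if "t \<in> S" for t
  proof -
    from that obtain x where "x \<in> spec_fam \<psi> t"
      using dual_ideal_empty[OF d] unfolding S_def by fastforce
    then show ?thesis using spec_fam_le[of x \<psi> t] K[of x] by linarith
  qed
  then have S_bdd: "bdd_below S" by (rule bdd_belowI)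
  have f_E_eq: "f_E \<psi> \<B> = Inf S" unfolding f_E_def S_def ..
  show ?thesis
    unfolding tendsto_dual_ideal_filter_iff[OF d] f_E_eq
  proof (intro allI impI)
    fix e :: real assume "e > 0"
    then obtain t where t: "t \<in> S" "t < Inf S + e" using cInf_lessD[OF S_ne] by force
    have "Inf S - e/2 \<notin> S" using cInf_lower[OF _ S_bdd] \<open>e > 0\<close> by force
    then have "\<psi> -` {..<Inf S - e/2} \<notin> \<B>"
      using dual_ideal_mono[OF d _ open_spec_fam vimage_lessThan_subset_spec_fam[OF cont]]
      unfolding S_def by blast
    then obtain V where V: "V \<in> \<B>" "V \<inter> \<psi> -` {..<Inf S - e/2} = {}"
      using quasipoint_disjoint[OF q open_vimage[OF open_lessThan cont]] by blast
    have "spec_fam \<psi> t \<inter> V \<in> \<B>" using dual_ideal_Int[OF d] t(1) V(1) unfolding S_def by blast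
    moreover have "dist (\<psi> x) (Inf S) < e" if "x \<in> spec_fam \<psi> t \<inter> V" for x
      using that spec_fam_le[of x \<psi> t] V(2) t(2) \<open>e > 0\<close> by (auto simp: dist_real_def)
    ultimately show "\<exists>U\<in>\<B>. \<forall>x\<in>U. dist (\<psi> x) (Inf S) < e" by blast
  qed
qed

lemma Cb_iff: "\<phi> \<in> Cb \<longleftrightarrow> continuous_on UNIV \<phi> \<and> (\<exists>K. \<forall>x. norm (\<phi> x) \<le> K)"
  unfolding Cb_def bounded_iff by auto

lemma Cb_add: "\<phi> \<in> Cb \<Longrightarrow> \<eta> \<in> Cb \<Longrightarrow> (\<lambda>x. \<phi> x + \<eta> x) \<in> Cb"
  unfolding Cb_def by (auto intro: continuous_intros bounded_plus_comp)

lemma Cb_mult: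
  assumes "\<phi> \<in> Cb" "\<eta> \<in> Cb"
  shows "(\<lambda>x. \<phi> x * \<eta> x) \<in> Cb"
proof -
  obtain K L where K: "\<And>x. norm (\<phi> x) \<le> K" and L: "\<And>x. norm (\<eta> x) \<le> L"
    using assms unfolding Cb_iff by blast
  have "norm (\<phi> x * \<eta> x) \<le> K * L" for x
    unfolding norm_mult using K L order_trans[OF norm_ge_zero K] by (intro mult_mono) auto
  with assms show ?thesis unfolding Cb_iff by (auto intro: continuous_intros)
qed

lemma Cb_const: "(\<lambda>x. c) \<in> Cb"
  unfolding Cb_iff by (auto intro: continuous_intros)

lemma Cb_cnj: "\<phi> \<in> Cb \<Longrightarrow> (\<lambda>x. cnj (\<phi> x)) \<in> Cb"
  unfolding Cb_iff by (auto intro: continuous_intros)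

lemma tendsto_fstar:
  assumes \<phi>: "\<phi> \<in> Cb" and q: "quasipoint \<B>"
  shows "(\<phi> \<longlongrightarrow> fstar \<phi> \<B>) (dual_ideal_filter \<B>)"
proof -
  obtain K where cont: "continuous_on UNIV \<phi>" and K: "\<And>x. norm (\<phi> x) \<le> K"
    using \<phi> unfolding Cb_iff by blast
  have "bounded (range (\<lambda>x. Re (\<phi> x)))" "bounded (range (\<lambda>x. Im (\<phi> x)))"
    unfolding bounded_iff using K abs_Re_le_cmod abs_Im_le_cmod order_trans
    by (metis rangeE real_norm_def)+
  with cont q show ?thesis
    unfolding tendsto_complex_iff fstar_def
    by (auto intro: tendsto_f_E continuous_on_Re continuous_on_Im)
qed

lemma fstar_eqI:
  assumes "\<phi> \<in> Cb" "quasipoint \<B>" "(\<phi> \<longlongrightarrow> z) (dual_ideal_filter \<B>)"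
  shows "fstar \<phi> \<B> = z"
  using tendsto_unique[OF dual_ideal_filter_nontrivial tendsto_fstar assms(3)]
    quasipoint_dual_ideal assms(1,2) by blast

lemma fstar_add:
  assumes "\<phi> \<in> Cb" "\<eta> \<in> Cb"
  shows "fstar (\<lambda>x. \<phi> x + \<eta> x) = (\<lambda>\<B>. fstar \<phi> \<B> + fstar \<eta> \<B>)"
proof
  fix \<B> :: "'a set set"
  show "fstar (\<lambda>x. \<phi> x + \<eta> x) \<B> = fstar \<phi> \<B> + fstar \<eta> \<B>"
  proof (cases "quasipoint \<B>")
    case True
    then show ?thesis using assms by (intro fstar_eqI Cb_add tendsto_add tendsto_fstar)
  qed (simp add: fstar_def)
qed

lemma fstar_mult:
  assumes "\<phi> \<in> Cb" "\<eta> \<in> Cb"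
  shows "fstar (\<lambda>x. \<phi> x * \<eta> x) = (\<lambda>\<B>. fstar \<phi> \<B> * fstar \<eta> \<B>)"
proof
  fix \<B> :: "'a set set"
  show "fstar (\<lambda>x. \<phi> x * \<eta> x) \<B> = fstar \<phi> \<B> * fstar \<eta> \<B>"
  proof (cases "quasipoint \<B>")
    case True
    then show ?thesis using assms by (intro fstar_eqI Cb_mult tendsto_mult tendsto_fstar)
  qed (simp add: fstar_def)
qed

lemma fstar_scale:
  assumes "\<phi> \<in> Cb"
  shows "fstar (\<lambda>x. c * \<phi> x) = (\<lambda>\<B>. c * fstar \<phi> \<B>)"
proof
  fix \<B> :: "'a set set"
  show "fstar (\<lambda>x. c * \<phi> x) \<B> = c * fstar \<phi> \<B>"
  proof (cases "quasipoint \<B>")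
    case True
    then show ?thesis
      using assms by (intro fstar_eqI Cb_mult Cb_const tendsto_mult tendsto_const tendsto_fstar)
  qed (simp add: fstar_def)
qed

lemma fstar_cnj:
  assumes "\<phi> \<in> Cb"
  shows "fstar (\<lambda>x. cnj (\<phi> x)) = (\<lambda>\<B>. cnj (fstar \<phi> \<B>))"
proof
  fix \<B> :: "'a set set"
  show "fstar (\<lambda>x. cnj (\<phi> x)) \<B> = cnj (fstar \<phi> \<B>)"
  proof (cases "quasipoint \<B>")
    case True
    then show ?thesis using assms by (intro fstar_eqI Cb_cnj tendsto_cnj tendsto_fstar)
  qed (simp add: fstar_def)
qed

section \<open>Quasipoints over a point\<close>

lemma over_nhds_mem:
  assumes over: "over \<B> x" and N: "open N" "x \<in> N"
  shows "N \<in> \<B>"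
proof (rule ccontr)
  assume "N \<notin> \<B>"
  have q: "quasipoint \<B>" using over unfolding over_def by blast
  obtain V where V: "V \<in> \<B>" "V \<inter> N = {}" using quasipoint_disjoint[OF q N(1) \<open>N \<notin> \<B>\<close>] by blast
  have "x \<in> closure V" using over V(1) unfolding over_def by blast
  moreover have "N \<inter> closure V = {}" using open_Int_closure_eq_empty[OF N(1)] V(2) by blast
  ultimately show False using N(2) by blast
qed

lemma ex_over: "\<exists>\<B>. over \<B> x"
proof -
  let ?N = "{N. open N \<and> x \<in> N}"
  have "\<Inter>\<F> \<noteq> {}" if "\<F> \<subseteq> ?N" for \<F>
  proof -
    have "x \<in> \<Inter>\<F>" using that by blast
    then show ?thesis by blast
  qed
  then obtain \<B> where q: "quasipoint \<B>" and N: "?N \<subseteq> \<B>"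
    using quasipoint_extends_fip[of ?N] by auto
  have d: "dual_ideal \<B>" using q by (rule quasipoint_dual_ideal)
  have "x \<in> closure U" if U: "U \<in> \<B>" for U
  proof (rule ccontr)
    assume "x \<notin> closure U"
    then have "- closure U \<in> ?N" by auto
    then have "- closure U \<in> \<B>" using N by blast
    then have "- closure U \<inter> U \<in> \<B>" using dual_ideal_Int[OF d _ U] by blast
    moreover have "- closure U \<inter> U = {}" using closure_subset by blast
    ultimately show False using dual_ideal_empty[OF d] by simp
  qed
  with q show ?thesis unfolding over_def by blast
qed

lemma fstar_over:
  assumes \<phi>: "\<phi> \<in> Cb" and over: "over \<B> x"
  shows "fstar \<phi> \<B> = \<phi> x"
proof -
  have q: "quasipoint \<B>" using over unfolding over_def by blast
  have cont: "continuous_on UNIV \<phi>" using \<phi> unfolding Cb_iff by blast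
  have "\<exists>U\<in>\<B>. \<forall>y\<in>U. dist (\<phi> y) (\<phi> x) < e" if "e > 0" for e
  proof
    show "\<phi> -` ball (\<phi> x) e \<in> \<B>"
      using that by (intro over_nhds_mem[OF over] open_vimage[OF open_ball cont]) simp
  qed (simp add: dist_commute)
  then have "(\<phi> \<longlongrightarrow> \<phi> x) (dual_ideal_filter \<B>)"
    unfolding tendsto_dual_ideal_filter_iff[OF quasipoint_dual_ideal[OF q]] by blast
  then show ?thesis by (rule fstar_eqI[OF \<phi> q])
qed

lemma inj_on_fstar: "inj_on fstar Cb"
proof (rule inj_onI)
  fix \<phi> \<eta> :: "'a \<Rightarrow> complex"
  assume "\<phi> \<in> Cb" "\<eta> \<in> Cb" and eq: "fstar \<phi> = fstar \<eta>"
  show "\<phi> = \<eta>"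
  proof
    fix x :: 'a
    obtain \<B> where "over \<B> x" using ex_over by blast
    then show "\<phi> x = \<eta> x" using fstar_over \<open>\<phi> \<in> Cb\<close> \<open>\<eta> \<in> Cb\<close> eq by metis
  qed
qed

section \<open>The topology of the Stone spectrum\<close>

definition Q_basic :: "'a::topological_space set \<Rightarrow> 'a set set set" where
  "Q_basic U = {\<B>. quasipoint \<B> \<and> U \<in> \<B>}"

lemma Q_top_eq: "Q_top = topology_generated_by {Q_basic U | U. open U}"
  unfolding Q_top_def Q_basic_def ..

lemma topspace_Q_top: "topspace Q_top = {\<B>. quasipoint \<B>}"
proof -
  have "Q_basic U \<subseteq> {\<B>. quasipoint \<B>}" for U unfolding Q_basic_def by blast
  moreover have "{\<B>. quasipoint \<B>} \<subseteq> Q_basic UNIV"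
    unfolding Q_basic_def using dual_ideal_UNIV[OF quasipoint_dual_ideal] by blast
  ultimately show ?thesis unfolding Q_top_eq topology_generated_by_topspace by blast
qed

lemma Q_basic_Int: "open U \<Longrightarrow> open V \<Longrightarrow> Q_basic (U \<inter> V) = Q_basic U \<inter> Q_basic V"
  unfolding Q_basic_def by (auto simp: dual_ideal_Int_iff quasipoint_dual_ideal)

lemma openin_Q_basic: "open U \<Longrightarrow> openin Q_top (Q_basic U)"
  unfolding Q_top_eq by (intro topology_generated_by_Basis) blast

lemma openin_Q_top_local:
  assumes "openin Q_top S"
  shows "\<forall>\<C>\<in>S. quasipoint \<C> \<and> (\<exists>U\<in>\<C>. Q_basic U \<subseteq> S)"
proof -
  have "generate_topology_on {Q_basic U | U. open U} S"
    using assms unfolding Q_top_eq by (rule openin_topology_generated_by)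
  then show ?thesis
  proof induction
    case Empty
    then show ?case by simp
  next
    case (Int S T)
    show ?case
    proof
      fix \<C> assume \<C>: "\<C> \<in> S \<inter> T"
      then obtain U where "quasipoint \<C>" and U: "U \<in> \<C>" "Q_basic U \<subseteq> S"
        using Int.IH(1) by blast
      from \<C> obtain V where V: "V \<in> \<C>" "Q_basic V \<subseteq> T"
        using Int.IH(2) by blast
      have d: "dual_ideal \<C>" using \<open>quasipoint \<C>\<close> by (rule quasipoint_dual_ideal)
      have "Q_basic (U \<inter> V) \<subseteq> S \<inter> T"
        using Q_basic_Int[OF dual_ideal_open[OF d U(1)] dual_ideal_open[OF d V(1)]] U(2) V(2)
        by blast
      with \<open>quasipoint \<C>\<close> dual_ideal_Int[OF d U(1) V(1)]
      show "quasipoint \<C> \<and> (\<exists>W\<in>\<C>. Q_basic W \<subseteq> S \<inter> T)" by blast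
    qed
  next
    case (UN \<K>)
    show ?case
    proof
      fix \<C> assume "\<C> \<in> \<Union>\<K>"
      then obtain K where "K \<in> \<K>" "\<C> \<in> K" by blast
      with UN.IH obtain U where "quasipoint \<C>" "U \<in> \<C>" "Q_basic U \<subseteq> K" by blast
      with \<open>K \<in> \<K>\<close> show "quasipoint \<C> \<and> (\<exists>U\<in>\<C>. Q_basic U \<subseteq> \<Union>\<K>)" by blast
    qed
  next
    case (Basis S)
    then obtain U where "S = Q_basic U" by blast
    then show ?case unfolding Q_basic_def by auto
  qed
qed

lemma openin_Q_top_iff:
  "openin Q_top S \<longleftrightarrow> (\<forall>\<C>\<in>S. quasipoint \<C> \<and> (\<exists>U\<in>\<C>. Q_basic U \<subseteq> S))"
proof
  assume local: "\<forall>\<C>\<in>S. quasipoint \<C> \<and> (\<exists>U\<in>\<C>. Q_basic U \<subseteq> S)"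
  show "openin Q_top S"
  proof (subst openin_subopen, intro ballI)
    fix \<C> assume "\<C> \<in> S"
    with local obtain U where \<C>: "quasipoint \<C>" "U \<in> \<C>" and "Q_basic U \<subseteq> S" by blast
    moreover have "openin Q_top (Q_basic U)"
      using openin_Q_basic dual_ideal_open[OF quasipoint_dual_ideal[OF \<C>(1)] \<C>(2)] by blast
    moreover have "\<C> \<in> Q_basic U" using \<C> unfolding Q_basic_def by blast
    ultimately show "\<exists>T. openin Q_top T \<and> \<C> \<in> T \<and> T \<subseteq> S" by blast
  qed
qed (rule openin_Q_top_local)

lemma continuous_map_Q_top_iff:
  fixes \<psi> :: "'a::topological_space set set \<Rightarrow> 'b::metric_space"
  shows "continuous_map Q_top euclidean \<psi> \<longleftrightarrow>
    (\<forall>\<C> e. quasipoint \<C> \<longrightarrow> e > 0 \<longrightarrow> (\<exists>U\<in>\<C>. \<forall>\<D>\<in>Q_basic U. dist (\<psi> \<D>) (\<psi> \<C>) < e))"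
    (is "_ \<longleftrightarrow> ?local")
proof
  assume cont: "continuous_map Q_top euclidean \<psi>"
  show ?local
  proof (intro allI impI)
    fix \<C> :: "'a set set" and e :: real assume "quasipoint \<C>" "e > 0"
    let ?S = "{\<D> \<in> topspace Q_top. \<psi> \<D> \<in> ball (\<psi> \<C>) e}"
    have "openin Q_top ?S" by (rule openin_continuous_map_preimage[OF cont]) simp
    moreover have "\<C> \<in> ?S" using \<open>quasipoint \<C>\<close> \<open>e > 0\<close> by (simp add: topspace_Q_top)
    ultimately obtain U where "U \<in> \<C>" "Q_basic U \<subseteq> ?S" unfolding openin_Q_top_iff by blast
    then show "\<exists>U\<in>\<C>. \<forall>\<D>\<in>Q_basic U. dist (\<psi> \<D>) (\<psi> \<C>) < e"
      by (intro bexI[of _ U]) (auto simp: dist_commute)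
  qed
next
  assume local: ?local
  show "continuous_map Q_top euclidean \<psi>"
    unfolding continuous_map_def
  proof (intro conjI allI impI)
    fix T :: "'b set" assume "openin euclidean T"
    then have T: "open T" by simp
    show "openin Q_top {\<D> \<in> topspace Q_top. \<psi> \<D> \<in> T}"
      unfolding openin_Q_top_iff topspace_Q_top
    proof (intro ballI conjI)
      fix \<C> assume \<C>: "\<C> \<in> {\<D> \<in> {\<B>. quasipoint \<B>}. \<psi> \<D> \<in> T}"
      then show "quasipoint \<C>" by simp
      obtain e where "e > 0" "ball (\<psi> \<C>) e \<subseteq> T" using T \<C> open_contains_ball by blast
      moreover obtain U where "U \<in> \<C>" "\<forall>\<D>\<in>Q_basic U. dist (\<psi> \<D>) (\<psi> \<C>) < e"
        using local \<open>quasipoint \<C>\<close> \<open>e > 0\<close> by blast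
      ultimately show "\<exists>U\<in>\<C>. Q_basic U \<subseteq> {\<D> \<in> {\<B>. quasipoint \<B>}. \<psi> \<D> \<in> T}"
        by (intro bexI[of _ U]) (auto simp: Q_basic_def dist_commute)
    qed
  qed simp
qed

lemma continuous_map_fstar:
  assumes \<phi>: "\<phi> \<in> Cb"
  shows "continuous_map Q_top euclidean (fstar \<phi>)"
  unfolding continuous_map_Q_top_iff
proof (intro allI impI)
  fix \<C> :: "'a set set" and e :: real assume \<C>: "quasipoint \<C>" and "e > 0"
  obtain U where U: "U \<in> \<C>" "\<forall>y\<in>U. dist (\<phi> y) (fstar \<phi> \<C>) < e/2"
    using tendsto_fstar[OF \<phi> \<C>] \<open>e > 0\<close> half_gt_zero
    unfolding tendsto_dual_ideal_filter_iff[OF quasipoint_dual_ideal[OF \<C>]] by blast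
  have "fstar \<phi> \<D> \<in> cball (fstar \<phi> \<C>) (e/2)" if "\<D> \<in> Q_basic U" for \<D>
  proof (rule Lim_in_closed_set[OF closed_cball])
    have \<D>: "quasipoint \<D>" "U \<in> \<D>" using that unfolding Q_basic_def by auto
    then show "eventually (\<lambda>y. \<phi> y \<in> cball (fstar \<phi> \<C>) (e/2)) (dual_ideal_filter \<D>)"
      unfolding eventually_dual_ideal_filter[OF quasipoint_dual_ideal[OF \<D>(1)]]
      using U(2) by (auto simp: dist_commute intro!: less_imp_le)
    show "dual_ideal_filter \<D> \<noteq> bot"
      using \<D>(1) by (intro dual_ideal_filter_nontrivial quasipoint_dual_ideal)
    show "(\<phi> \<longlongrightarrow> fstar \<phi> \<D>) (dual_ideal_filter \<D>)" using tendsto_fstar[OF \<phi> \<D>(1)] .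
  qed
  with U(1) \<open>e > 0\<close> show "\<exists>U\<in>\<C>. \<forall>\<D>\<in>Q_basic U. dist (fstar \<phi> \<D>) (fstar \<phi> \<C>) < e"
    by (force simp: dist_commute)
qed

lemma fstar_in_Cpt:
  assumes \<phi>: "\<phi> \<in> Cb"
  shows "fstar \<phi> \<in> Cpt"
  unfolding Cpt_def
proof (intro CollectI conjI allI impI)
  show "fstar \<phi> \<B> = 0" if "\<not> quasipoint \<B>" for \<B> using that by (simp add: fstar_def)
  show "continuous_map Q_top euclidean (fstar \<phi>)" using \<phi> by (rule continuous_map_fstar)
  fix x :: 'a and \<B>\<^sub>1 \<B>\<^sub>2 assume "over \<B>\<^sub>1 x \<and> over \<B>\<^sub>2 x"
  then show "fstar \<phi> \<B>\<^sub>1 = fstar \<phi> \<B>\<^sub>2" using fstar_over[OF \<phi>] by metis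
qed

lemma quasipoint_cover_finite:
  fixes \<U> :: "'a::topological_space set set"
  assumes opn: "\<And>U. U \<in> \<U> \<Longrightarrow> open U" and cover: "\<And>\<C>. quasipoint \<C> \<Longrightarrow> \<exists>U\<in>\<U>. U \<in> \<C>"
  shows "\<exists>\<F>\<subseteq>\<U>. finite \<F> \<and> (\<forall>\<C>. quasipoint \<C> \<longrightarrow> (\<exists>U\<in>\<F>. U \<in> \<C>))"
proof (rule ccontr)
  assume no_finite: "\<not> ?thesis"
  let ?\<V> = "(\<lambda>U. interior (- U)) ` \<U>"
  have "\<Inter>\<G> \<noteq> {}" if \<G>: "finite \<G>" "\<G> \<subseteq> ?\<V>" for \<G>
  proof -
    obtain \<F> where \<F>: "\<F> \<subseteq> \<U>" "finite \<F>" "\<G> = (\<lambda>U. interior (- U)) ` \<F>"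
      using finite_subset_image[OF \<G>] by blast
    obtain \<C> where \<C>: "quasipoint \<C>" "\<And>U. U \<in> \<F> \<Longrightarrow> U \<notin> \<C>"
      using no_finite \<F>(1,2) by auto
    have d: "dual_ideal \<C>" using \<C>(1) by (rule quasipoint_dual_ideal)
    have "interior (- U) \<in> \<C>" if "U \<in> \<F>" for U
      using quasipoint_interior_compl[OF \<C>(1) opn \<C>(2)] that \<F>(1) by blast
    then have "\<G> \<subseteq> \<C>" using \<F>(3) by blast
    then have "\<Inter>\<G> \<in> \<C>" using dual_ideal_Inter[OF d \<open>finite \<G>\<close>] by blast
    then show ?thesis using dual_ideal_empty[OF d] by auto
  qed
  moreover have "open V" if "V \<in> ?\<V>" for V using that by auto
  ultimately obtain \<C> where \<C>: "quasipoint \<C>" "?\<V> \<subseteq> \<C>"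
    using quasipoint_extends_fip[of ?\<V>] by blast
  have d: "dual_ideal \<C>" using \<C>(1) by (rule quasipoint_dual_ideal)
  obtain U where "U \<in> \<U>" "U \<in> \<C>" using cover \<C>(1) by blast
  then have "U \<inter> interior (- U) \<in> \<C>" using \<C>(2) dual_ideal_Int[OF d] by blast
  moreover have "U \<inter> interior (- U) = {}" using interior_subset by blast
  ultimately show False using dual_ideal_empty[OF d] by simp
qed

lemma continuous_map_Q_top_bounded:
  fixes \<psi> :: "'a::topological_space set set \<Rightarrow> 'b::metric_space"
  assumes cont: "continuous_map Q_top euclidean \<psi>"
  shows "bounded (\<psi> ` {\<B>. quasipoint \<B>})"
proof -
  let ?\<U> = "{U. open U \<and> bounded (\<psi> ` Q_basic U)}"
  have "\<exists>U\<in>?\<U>. U \<in> \<C>" if \<C>: "quasipoint \<C>" for \<C>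
  proof -
    obtain U where U: "U \<in> \<C>" "\<forall>\<D>\<in>Q_basic U. dist (\<psi> \<D>) (\<psi> \<C>) < 1"
      using cont \<C> unfolding continuous_map_Q_top_iff by (meson zero_less_one)
    then have "\<psi> ` Q_basic U \<subseteq> ball (\<psi> \<C>) 1" by (auto simp: dist_commute)
    then have "bounded (\<psi> ` Q_basic U)" by (rule bounded_subset[OF bounded_ball])
    with U(1) show ?thesis using dual_ideal_open[OF quasipoint_dual_ideal[OF \<C>]] by blast
  qed
  then obtain \<F> where \<F>: "\<F> \<subseteq> ?\<U>" "finite \<F>" "\<forall>\<C>. quasipoint \<C> \<longrightarrow> (\<exists>U\<in>\<F>. U \<in> \<C>)"
    using quasipoint_cover_finite[of ?\<U>] by auto
  have "\<psi> ` {\<B>. quasipoint \<B>} \<subseteq> (\<Union>U\<in>\<F>. \<psi> ` Q_basic U)"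
    using \<F>(3) unfolding Q_basic_def by blast
  moreover have "bounded (\<Union>U\<in>\<F>. \<psi> ` Q_basic U)" using \<F>(1,2) by auto
  ultimately show ?thesis using bounded_subset by blast
qed

section \<open>Functions constant on the fibres of \<open>pt\<close>\<close>

definition qp_over :: "'a::topological_space \<Rightarrow> 'a set set" where
  "qp_over x = (SOME \<B>. over \<B> x)"

lemma over_qp_over: "over (qp_over x) x"
  unfolding qp_over_def using ex_over by (rule someI_ex)

lemma quasipoint_qp_over: "quasipoint (qp_over x)"
  using over_qp_over unfolding over_def by blast

lemma Cpt_comp_qp_over_near:
  assumes \<psi>: "\<psi> \<in> Cpt" and "e > 0"
  shows "\<exists>N. open N \<and> x \<in> N \<and> (\<forall>y\<in>N. dist (\<psi> (qp_over y)) (\<psi> (qp_over x)) < e)"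
proof -
  have cont: "continuous_map Q_top euclidean \<psi>"
    and fibre: "\<And>\<B>\<^sub>1 \<B>\<^sub>2. over \<B>\<^sub>1 x \<Longrightarrow> over \<B>\<^sub>2 x \<Longrightarrow> \<psi> \<B>\<^sub>1 = \<psi> \<B>\<^sub>2"
    using \<psi> unfolding Cpt_def by blast+
  \<comment> \<open>\<open>N\<close> avoids the closures of the members of a finite subcover that stay away from \<open>x\<close>, so a
     quasipoint over a point of \<open>N\<close> contains one of the other members, on whose basic set \<open>\<psi>\<close> is
     \<open>e\<close>-close to its value on the fibre over \<open>x\<close>.\<close>
  let ?\<V> = "{U. open U \<and> (x \<notin> closure U \<or> (\<forall>\<D>\<in>Q_basic U. dist (\<psi> \<D>) (\<psi> (qp_over x)) < e))}"
  have "\<exists>U\<in>?\<V>. U \<in> \<C>" if \<C>: "quasipoint \<C>" for \<C>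
  proof (cases "over \<C> x")
    case True
    then have "\<psi> \<C> = \<psi> (qp_over x)" using fibre over_qp_over by blast
    moreover obtain U where "U \<in> \<C>" "\<forall>\<D>\<in>Q_basic U. dist (\<psi> \<D>) (\<psi> \<C>) < e"
      using cont \<C> \<open>e > 0\<close> unfolding continuous_map_Q_top_iff by blast
    ultimately show ?thesis using dual_ideal_open[OF quasipoint_dual_ideal[OF \<C>]] by auto
  next
    case False
    then obtain U where "U \<in> \<C>" "x \<notin> closure U" using \<C> unfolding over_def by blast
    then show ?thesis using dual_ideal_open[OF quasipoint_dual_ideal[OF \<C>]] by auto
  qed
  then obtain \<G> where \<G>: "\<G> \<subseteq> ?\<V>" "finite \<G>" "\<forall>\<C>. quasipoint \<C> \<longrightarrow> (\<exists>U\<in>\<G>. U \<in> \<C>)"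
    using quasipoint_cover_finite[of ?\<V>] by auto
  define N where "N = (\<Inter>U\<in>{U\<in>\<G>. x \<notin> closure U}. - closure U)"
  have "open N" unfolding N_def using \<G>(2) by (intro open_INT) auto
  moreover have "x \<in> N" unfolding N_def by blast
  moreover have "dist (\<psi> (qp_over y)) (\<psi> (qp_over x)) < e" if "y \<in> N" for y
  proof -
    obtain U where U: "U \<in> \<G>" "U \<in> qp_over y" using \<G>(3) quasipoint_qp_over by blast
    then have "y \<in> closure U" using over_qp_over[of y] unfolding over_def by blast
    with U(1) \<open>y \<in> N\<close> have "x \<in> closure U" unfolding N_def by blast
    with U \<G>(1) quasipoint_qp_over show ?thesis unfolding Q_basic_def by blast
  qed
  ultimately show ?thesis by blast
qed

lemma continuous_on_Cpt_comp_qp_over: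
  assumes "\<psi> \<in> Cpt"
  shows "continuous_on UNIV (\<lambda>x. \<psi> (qp_over x))"
proof -
  have "((\<lambda>y. \<psi> (qp_over y)) \<longlongrightarrow> \<psi> (qp_over x)) (nhds x)" for x
    unfolding tendsto_iff eventually_nhds using Cpt_comp_qp_over_near[OF assms] by blast
  then show ?thesis
    unfolding continuous_on_def using tendsto_mono[OF at_within_le_nhds] by blast
qed

lemma fstar_Cpt_comp_qp_over:
  assumes \<psi>: "\<psi> \<in> Cpt" and in_Cb: "(\<lambda>x. \<psi> (qp_over x)) \<in> Cb"
  shows "fstar (\<lambda>x. \<psi> (qp_over x)) = \<psi>"
proof
  fix \<B> :: "'a set set"
  show "fstar (\<lambda>x. \<psi> (qp_over x)) \<B> = \<psi> \<B>"
  proof (cases "quasipoint \<B>")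
    case False
    then show ?thesis using \<psi> by (simp add: Cpt_def fstar_def)
  next
    case q: True
    have d: "dual_ideal \<B>" using q by (rule quasipoint_dual_ideal)
    have "\<exists>U\<in>\<B>. \<forall>y\<in>U. dist (\<psi> (qp_over y)) (\<psi> \<B>) < e" if "e > 0" for e
    proof -
      obtain U where U: "U \<in> \<B>" "\<forall>\<D>\<in>Q_basic U. dist (\<psi> \<D>) (\<psi> \<B>) < e"
        using \<psi> q \<open>e > 0\<close> unfolding Cpt_def continuous_map_Q_top_iff by blast
      have "U \<in> qp_over y" if "y \<in> U" for y
        using over_nhds_mem[OF over_qp_over dual_ideal_open[OF d U(1)] that] .
      with U quasipoint_qp_over show ?thesis unfolding Q_basic_def by blast
    qed
    then show ?thesis
      by (intro fstar_eqI[OF in_Cb q]) (simp add: tendsto_dual_ideal_filter_iff[OF d])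
  qed
qed

lemma Cpt_subset_fstar_image: "Cpt \<subseteq> fstar ` Cb"
proof
  fix \<psi> :: "'a set set \<Rightarrow> complex" assume \<psi>: "\<psi> \<in> Cpt"
  have "range (\<lambda>x. \<psi> (qp_over x)) \<subseteq> \<psi> ` {\<B>. quasipoint \<B>}"
    using quasipoint_qp_over by blast
  moreover have "bounded (\<psi> ` {\<B>. quasipoint \<B>})"
    using \<psi> unfolding Cpt_def by (intro continuous_map_Q_top_bounded) blast
  ultimately have in_Cb: "(\<lambda>x. \<psi> (qp_over x)) \<in> Cb"
    using continuous_on_Cpt_comp_qp_over[OF \<psi>] bounded_subset unfolding Cb_def by blast
  show "\<psi> \<in> fstar ` Cb"
    using fstar_Cpt_comp_qp_over[OF \<psi> in_Cb] in_Cb by (metis image_eqI)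
qed

theorem theorem2p45:
  shows "bij_betw (fstar :: (('a::t2_space) \<Rightarrow> complex) \<Rightarrow> _) Cb Cpt \<and>
    (\<forall>\<phi>\<in>(Cb :: ('a::t2_space \<Rightarrow> complex) set). \<forall>\<eta>\<in>(Cb :: ('a::t2_space \<Rightarrow> complex) set).
       fstar (\<lambda>x. \<phi> x + \<eta> x) = (\<lambda>\<B>. fstar \<phi> \<B> + fstar \<eta> \<B>) \<and>
       fstar (\<lambda>x. \<phi> x * \<eta> x) = (\<lambda>\<B>. fstar \<phi> \<B> * fstar \<eta> \<B>)) \<and>
    (\<forall>\<phi>\<in>(Cb :: ('a::t2_space \<Rightarrow> complex) set). \<forall>c::complex. fstar (\<lambda>x. c * \<phi> x) = (\<lambda>\<B>. c * fstar \<phi> \<B>)) \<and>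
    (\<forall>\<phi>\<in>(Cb :: ('a::t2_space \<Rightarrow> complex) set). fstar (\<lambda>x. cnj (\<phi> x)) = (\<lambda>\<B>. cnj (fstar \<phi> \<B>)))"
proof (intro conjI ballI allI)
  show "bij_betw (fstar :: ('a \<Rightarrow> complex) \<Rightarrow> _) Cb Cpt"
    unfolding bij_betw_def using inj_on_fstar fstar_in_Cpt Cpt_subset_fstar_image by blast
qed (simp_all add: fstar_add fstar_mult fstar_scale fstar_cnj)

end
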